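(* Consider an instance of Bin Packing with Usage Cost: items whose distinct sizes are the positive integers $w'_1,\dots,w'_{n'}$, with $q_d\ge 1$ items of size $w'_d$, and $m$ bins, bin $j$ having positive integer capacity $C_j$, fixed cost $f_j\ge 0$ and unit cost $c_j\ge0$; let $C_{\max}=\max_j C_j$. Let $z_2^*$ be the optimal value of the linear relaxation of the cutting-stock formulation and $z_3^*$ the optimal value of the linear relaxation of the arc-flow formulation, both defined below, and assume the former is feasible. Then $z_3^*\le z_2^*$. Cutting-stock relaxation: for each bin $j$, a pattern is an integer vector $g=(g_1,\dots,g_{n'})$ with $0\le g_d\le q_d$ and $\sum_d g_dw'_d\le C_j$; $I_j$ is the set of all patterns for bin $j$, and the $i$-th pattern of bin $j$ is $(g_{1ij},\dots,g_{n'ij})$, with cost $co_{ij}=f_j+c_j\sum_d g_{dij}w'_d$ if the pattern is nonzero and $co_{ij}=0$ if it is the zero vector. $z_2^*=\min\sum_{j=1}^m\sum_{i\in I_j}co_{ij}p_{ij}$ subject to $\sum_{j=1}^m\sum_{i\in I_j}g_{dij}p_{ij}=q_d$ for all $d$, $\sum_{i\in I_j}p_{ij}=1$ for all $j$, and $p_{ij}\ge 0$. Arc-flow relaxation: let $I$ be the set of arcs $(a,a+w'_d)$ with $a\ge 0$ integer, $d\in\{1,\dots,n'\}$ and $a+w'_d\le C_{\max}$, with a variable $x_{ab}\ge 0$ for each arc $(a,b)\in I$, and a variable $y_{aj}\in[0,1]$ for each bin $j$ and $a\in\{0,\dots,C_{\max}\}$ (representing an arc from node $a$ to a sink, for bin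 $j$), with cost $co_{aj}=f_j+a\,c_j$ for $a>0$ and $co_{0j}=0$. $z_3^*=\min\sum_{j=1}^m\sum_{a=0}^{C_{\max}}co_{aj}y_{aj}$ subject to: for every $b\in\{1,\dots,C_{\max}\}$, $\sum_{(a,b)\in I}x_{ab}-\sum_{(b,c)\in I}x_{bc}-\sum_{j=1}^m y_{bj}=0$; $-\sum_{(0,c)\in I}x_{0c}-\sum_{j=1}^m y_{0j}=-m$; $\sum_{a=0}^{C_j}y_{aj}=1$ for every $j$; $\sum_{(a,a+w'_d)\in I}x_{a,a+w'_d}=q_d$ for every $d$; and $y_{aj}=0$ for every $j$ and $a\in\{C_j+1,\dots,C_{\max}\}$.
   Context: Bin Packing with Usage Cost: each item must be assigned to exactly one bin, the total size $l_j$ of the items in bin $j$ may not exceed $C_j$, a bin is used if it contains at least one item, a used bin $j$ costs $f_j+c_jl_j$, and the total cost is to be minimised. Both formulations above are linear relaxations of exact integer formulations of this problem (with $p_{ij}\in\{0,1\}$, $x_{ab}\in\mathbb{N}$, $y_{aj}\in\{0,1\}$ respectively). *)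

theory Defs
  imports Complex_Main
begin

text \<open>Instance data: item types d < n' with sizes w d and multiplicities q d;
  bins j < m with capacity C j, fixed cost f j, unit cost c j.\<close>

definition patterns :: "nat \<Rightarrow> (nat \<Rightarrow> nat) \<Rightarrow> (nat \<Rightarrow> nat) \<Rightarrow> nat \<Rightarrow> (nat \<Rightarrow> nat) set" where
  "patterns n' w q Cj = {g. (\<forall>d<n'. g d \<le> q d) \<and> (\<forall>d\<ge>n'. g d = 0)
                             \<and> (\<Sum>d<n'. g d * w d) \<le> Cj}"

definition pattern_cost :: "nat \<Rightarrow> (nat \<Rightarrow> nat) \<Rightarrow> real \<Rightarrow> real \<Rightarrow> (nat \<Rightarrow> nat) \<Rightarrow> real" where
  "pattern_cost n' w fj cj g =
     (if g = (\<lambda>_. 0) then 0 else fj + cj * real (\<Sum>d<n'. g d * w d))"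

definition cs_feasible ::
  "nat \<Rightarrow> (nat \<Rightarrow> nat) \<Rightarrow> (nat \<Rightarrow> nat) \<Rightarrow> nat \<Rightarrow> (nat \<Rightarrow> nat)
   \<Rightarrow> (nat \<Rightarrow> (nat \<Rightarrow> nat) \<Rightarrow> real) \<Rightarrow> bool" where
  "cs_feasible n' w q m C p \<longleftrightarrow>
     (\<forall>d<n'. (\<Sum>j<m. \<Sum>g\<in>patterns n' w q (C j). real (g d) * p j g) = real (q d))
   \<and> (\<forall>j<m. (\<Sum>g\<in>patterns n' w q (C j). p j g) = 1)
   \<and> (\<forall>j<m. \<forall>g\<in>patterns n' w q (C j). p j g \<ge> 0)"

definition cs_objective ::
  "nat \<Rightarrow> (nat \<Rightarrow> nat) \<Rightarrow> (nat \<Rightarrow> nat) \<Rightarrow> nat \<Rightarrow> (nat \<Rightarrow> nat)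
   \<Rightarrow> (nat \<Rightarrow> real) \<Rightarrow> (nat \<Rightarrow> real) \<Rightarrow> (nat \<Rightarrow> (nat \<Rightarrow> nat) \<Rightarrow> real) \<Rightarrow> real" where
  "cs_objective n' w q m C f c p =
     (\<Sum>j<m. \<Sum>g\<in>patterns n' w q (C j). pattern_cost n' w (f j) (c j) g * p j g)"

definition z2 ::
  "nat \<Rightarrow> (nat \<Rightarrow> nat) \<Rightarrow> (nat \<Rightarrow> nat) \<Rightarrow> nat \<Rightarrow> (nat \<Rightarrow> nat)
   \<Rightarrow> (nat \<Rightarrow> real) \<Rightarrow> (nat \<Rightarrow> real) \<Rightarrow> real" where
  "z2 n' w q m C f c = Inf (cs_objective n' w q m C f c ` {p. cs_feasible n' w q m C p})"

text \<open>C_max = max_j C_j (the 0 only matters in the degenerate case m = 0).\<close>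
definition Cmax :: "nat \<Rightarrow> (nat \<Rightarrow> nat) \<Rightarrow> nat" where
  "Cmax m C = Max (insert 0 (C ` {..<m}))"

definition arcs :: "nat \<Rightarrow> (nat \<Rightarrow> nat) \<Rightarrow> nat \<Rightarrow> (nat \<times> nat) set" where
  "arcs n' w K = {(a, a + w d) | a d. d < n' \<and> a + w d \<le> K}"

definition af_cost :: "real \<Rightarrow> real \<Rightarrow> nat \<Rightarrow> real" where
  "af_cost fj cj a = (if a = 0 then 0 else fj + real a * cj)"

definition af_feasible ::
  "nat \<Rightarrow> (nat \<Rightarrow> nat) \<Rightarrow> (nat \<Rightarrow> nat) \<Rightarrow> nat \<Rightarrow> (nat \<Rightarrow> nat)
   \<Rightarrow> (nat \<times> nat \<Rightarrow> real) \<Rightarrow> (nat \<Rightarrow> nat \<Rightarrow> real) \<Rightarrow> bool" where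
  "af_feasible n' w q m C x y \<longleftrightarrow>
     (let K = Cmax m C; I = arcs n' w K in
        (\<forall>e\<in>I. x e \<ge> 0)
      \<and> (\<forall>j<m. \<forall>a\<le>K. 0 \<le> y a j \<and> y a j \<le> 1)
      \<and> (\<forall>b\<in>{1..K}. (\<Sum>e\<in>{e\<in>I. snd e = b}. x e) - (\<Sum>e\<in>{e\<in>I. fst e = b}. x e)
                        - (\<Sum>j<m. y b j) = 0)
      \<and> - (\<Sum>e\<in>{e\<in>I. fst e = 0}. x e) - (\<Sum>j<m. y 0 j) = - real m
      \<and> (\<forall>j<m. (\<Sum>a\<in>{0..C j}. y a j) = 1)
      \<and> (\<forall>d<n'. (\<Sum>e\<in>{e\<in>I. snd e = fst e + w d}. x e) = real (q d))
      \<and> (\<forall>j<m. \<forall>a\<in>{C j + 1..K}. y a j = 0))"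

definition af_objective ::
  "nat \<Rightarrow> (nat \<Rightarrow> nat) \<Rightarrow> (nat \<Rightarrow> real) \<Rightarrow> (nat \<Rightarrow> real) \<Rightarrow> (nat \<Rightarrow> nat \<Rightarrow> real) \<Rightarrow> real" where
  "af_objective m C f c y = (\<Sum>j<m. \<Sum>a\<in>{0..Cmax m C}. af_cost (f j) (c j) a * y a j)"

definition z3 ::
  "nat \<Rightarrow> (nat \<Rightarrow> nat) \<Rightarrow> (nat \<Rightarrow> nat) \<Rightarrow> nat \<Rightarrow> (nat \<Rightarrow> nat)
   \<Rightarrow> (nat \<Rightarrow> real) \<Rightarrow> (nat \<Rightarrow> real) \<Rightarrow> real" where
  "z3 n' w q m C f c =
     Inf ((\<lambda>(x, y). af_objective m C f c y) ` {(x, y). af_feasible n' w q m C x y})"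

end

theory Submission
  imports Defs
begin

text \<open>A pattern g of bin j is a path in the arc graph from node 0 to node pattern_size g, the total
  size of g: place its items one after another, each item of type d contributing an arc of length w d. Superposing these
  paths with weights p j g gives an arc flow x, and sending the weight of each pattern of size a to
  the sink from node a gives y. Flow conservation holds path by path; since the weights are positive
  no arc enters node 0, and since they are distinct the arcs of length w d count exactly the items of
  type d. Both objectives charge a pattern f j + c j * size (or 0 for the empty pattern), so (x, y) is
  arc-flow feasible with the same cost, whence z3 \<le> z2.\<close>

fun walk :: "nat \<Rightarrow> (nat \<Rightarrow> nat) \<Rightarrow> nat list \<Rightarrow> (nat \<times> nat) list" where
  "walk a w [] = []"
| "walk a w (d # ds) = (a, a + w d) # walk (a + w d) w ds"

lemma walk_subset_arcs:
  assumes "set ds \<subseteq> {..<N}" and "a + sum_list (map w ds) \<le> K"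
  shows "set (walk a w ds) \<subseteq> arcs N w K"
  using assms by (induction ds arbitrary: a) (auto simp: arcs_def)

lemma walk_balance:
  "length (filter (\<lambda>e. snd e = b) (walk a w ds)) + of_bool (a = b)
   = length (filter (\<lambda>e. fst e = b) (walk a w ds)) + of_bool (a + sum_list (map w ds) = b)"
proof (induction ds arbitrary: a)
  case (Cons d ds)
  have step: "length (filter P (walk a w (d # ds)))
      = of_bool (P (a, a + w d)) + length (filter P (walk (a + w d) w ds))" for P
    by simp
  show ?case using Cons.IH[of "a + w d"]
    by (simp only: step fst_conv snd_conv list.map sum_list.Cons add.assoc)
qed simp

lemma walk_snd_gt:
  assumes "\<forall>d\<in>set ds. 0 < w d" and "e \<in> set (walk a w ds)"
  shows "a < snd e"
  using assms by (induction ds arbitrary: a) fastforce+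

lemma length_filter_walk_item_arcs:
  assumes "inj_on w (insert d (set ds))"
  shows "length (filter (\<lambda>e. snd e = fst e + w d) (walk a w ds)) = count_list ds d"
  using assms
proof (induction ds arbitrary: a)
  case (Cons d' ds)
  have "inj_on w (insert d (set ds))"
    using Cons.prems by (rule inj_on_subset) auto
  moreover have "w d' = w d \<longleftrightarrow> d' = d"
    using Cons.prems by (rule inj_on_eq_iff) auto
  ultimately show ?case
    using Cons.IH by simp
qed simp

lemma sum_count_list_filter:
  assumes "finite S" and "set xs \<subseteq> S"
  shows "(\<Sum>e\<in>{e\<in>S. P e}. count_list xs e) = length (filter P xs)"
proof -
  have "count_list xs e = count_list (filter P xs) e" if "P e" for e
    using that by (induction xs) auto
  then have "(\<Sum>e\<in>{e\<in>S. P e}. count_list xs e) = (\<Sum>e\<in>{e\<in>S. P e}. count_list (filter P xs) e)"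
    by simp
  also have "\<dots> = length (filter P xs)"
    using assms by (intro sum_count_set) auto
  finally show ?thesis .
qed

definition pattern_items :: "nat \<Rightarrow> (nat \<Rightarrow> nat) \<Rightarrow> nat list" where
  "pattern_items n g = concat (map (\<lambda>d. replicate (g d) d) [0..<n])"

lemma set_pattern_items: "set (pattern_items n g) \<subseteq> {..<n}"
  by (induction n) (auto simp: pattern_items_def)

lemma count_list_pattern_items:
  assumes "d < n"
  shows "count_list (pattern_items n g) d = g d"
  using assms
proof (induction n)
  case (Suc n)
  have "count_list (replicate k x) y = (if x = y then k else 0)" for k and x y :: nat
    by (induction k) auto
  moreover have "d \<notin> set (pattern_items n g)" if "d = n"
    using set_pattern_items that by blast
  ultimately show ?case
    using Suc by (auto simp: pattern_items_def count_list_0_iff less_Suc_eq)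
qed simp

lemma sum_list_pattern_items: "sum_list (map w (pattern_items n g)) = (\<Sum>d<n. g d * w d)"
  by (induction n) (auto simp: pattern_items_def sum_list_replicate)

definition pattern_size :: "nat \<Rightarrow> (nat \<Rightarrow> nat) \<Rightarrow> (nat \<Rightarrow> nat) \<Rightarrow> nat" where
  "pattern_size n w g = (\<Sum>d<n. g d * w d)"

definition pattern_path :: "nat \<Rightarrow> (nat \<Rightarrow> nat) \<Rightarrow> (nat \<Rightarrow> nat) \<Rightarrow> (nat \<times> nat) list" where
  "pattern_path n w g = walk 0 w (pattern_items n g)"

lemma finite_arcs: "finite (arcs n w K)"
  by (rule finite_subset[of _ "{..K} \<times> {..K}"]) (auto simp: arcs_def)

lemma pattern_size_le: "g \<in> patterns n w q K \<Longrightarrow> pattern_size n w g \<le> K"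
  by (simp add: patterns_def pattern_size_def)

lemma pattern_path_subset_arcs:
  assumes "g \<in> patterns n w q K" and "K \<le> K'"
  shows "set (pattern_path n w g) \<subseteq> arcs n w K'"
  unfolding pattern_path_def
  using assms pattern_size_le[OF assms(1)] set_pattern_items
  by (intro walk_subset_arcs) (auto simp: sum_list_pattern_items pattern_size_def)

lemma pattern_path_balance:
  "real (length (filter (\<lambda>e. fst e = b) (pattern_path n w g))) + of_bool (pattern_size n w g = b)
   = real (length (filter (\<lambda>e. snd e = b) (pattern_path n w g))) + of_bool (b = 0)"
proof -
  have "length (filter (\<lambda>e. snd e = b) (pattern_path n w g)) + of_bool (b = 0)
      = length (filter (\<lambda>e. fst e = b) (pattern_path n w g)) + of_bool (pattern_size n w g = b)"
    using walk_balance[of b 0 w "pattern_items n g"]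
    by (simp add: pattern_path_def pattern_size_def sum_list_pattern_items)
  from arg_cong[where f = real, OF this] show ?thesis
    by simp
qed

lemma pattern_path_no_arc_into_0:
  assumes "\<forall>d<n. 0 < w d"
  shows "filter (\<lambda>e. snd e = 0) (pattern_path n w g) = []"
  using assms set_pattern_items walk_snd_gt[of "pattern_items n g" w _ 0]
  by (fastforce simp: pattern_path_def filter_empty_conv)

lemma length_filter_pattern_path_item_arcs:
  assumes "inj_on w {..<n}" and "d < n"
  shows "length (filter (\<lambda>e. snd e = fst e + w d) (pattern_path n w g)) = g d"
proof -
  have "inj_on w (insert d (set (pattern_items n g)))"
    using assms(2) set_pattern_items by (intro inj_on_subset[OF assms(1)]) auto
  then show ?thesis
    using assms(2) by (simp add: pattern_path_def length_filter_walk_item_arcs count_list_pattern_items)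
qed

lemma pattern_cost_eq_af_cost:
  assumes "g \<in> patterns n w q K" and "\<forall>d<n. 0 < w d"
  shows "pattern_cost n w fj cj g = af_cost fj cj (pattern_size n w g)"
proof (cases "g = (\<lambda>_. 0)")
  case True
  then show ?thesis by (simp add: pattern_cost_def af_cost_def pattern_size_def)
next
  case False
  then obtain d where "g d \<noteq> 0" by auto
  moreover have "d < n"
    using \<open>g d \<noteq> 0\<close> assms(1) by (auto simp: patterns_def not_less[symmetric])
  ultimately have "0 < g d * w d" using assms(2) by simp
  also have "g d * w d \<le> pattern_size n w g"
    unfolding pattern_size_def using \<open>d < n\<close> by (intro member_le_sum) auto
  finally have "pattern_size n w g \<noteq> 0" by simp
  moreover have "pattern_cost n w fj cj g = fj + cj * real (pattern_size n w g)"
    using False by (simp only: pattern_cost_def pattern_size_def if_False)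
  ultimately show ?thesis by (simp add: af_cost_def mult.commute)
qed

locale cs_solution =
  fixes n' m :: nat and w q C :: "nat \<Rightarrow> nat" and p :: "nat \<Rightarrow> (nat \<Rightarrow> nat) \<Rightarrow> real"
  assumes inj_weights: "inj_on w {..<n'}"
    and pos_weights: "\<forall>d<n'. 0 < w d"
    and feasible: "cs_feasible n' w q m C p"
begin

abbreviation bin_patterns :: "nat \<Rightarrow> (nat \<Rightarrow> nat) set" where
  "bin_patterns j \<equiv> patterns n' w q (C j)"

abbreviation graph_arcs :: "(nat \<times> nat) set" where
  "graph_arcs \<equiv> arcs n' w (Cmax m C)"

definition arc_flow :: "nat \<times> nat \<Rightarrow> real" where
  "arc_flow e = (\<Sum>j<m. \<Sum>g\<in>bin_patterns j. p j g * real (count_list (pattern_path n' w g) e))"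

definition sink_flow :: "nat \<Rightarrow> nat \<Rightarrow> real" where
  "sink_flow a j = (\<Sum>g\<in>bin_patterns j. if pattern_size n' w g = a then p j g else 0)"

lemma demand: "d < n' \<Longrightarrow> (\<Sum>j<m. \<Sum>g\<in>bin_patterns j. real (g d) * p j g) = real (q d)"
  and convexity: "j < m \<Longrightarrow> (\<Sum>g\<in>bin_patterns j. p j g) = 1"
  and weight_nonneg: "j < m \<Longrightarrow> g \<in> bin_patterns j \<Longrightarrow> 0 \<le> p j g"
  using feasible by (auto simp: cs_feasible_def)

lemma capacity_le_Cmax: "j < m \<Longrightarrow> C j \<le> Cmax m C"
  unfolding Cmax_def by (intro Max_ge) auto

lemma sum_arc_flow:
  "(\<Sum>e\<in>{e\<in>graph_arcs. Q e}. arc_flow e)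
   = (\<Sum>j<m. \<Sum>g\<in>bin_patterns j. p j g * real (length (filter Q (pattern_path n' w g))))"
proof -
  have "(\<Sum>e\<in>{e\<in>graph_arcs. Q e}. arc_flow e)
      = (\<Sum>j<m. \<Sum>g\<in>bin_patterns j. p j g *
           (\<Sum>e\<in>{e\<in>graph_arcs. Q e}. real (count_list (pattern_path n' w g) e)))"
    unfolding arc_flow_def sum_distrib_left
    by (subst sum.swap) (simp add: sum.swap[where A = "{e\<in>graph_arcs. Q e}"])
  also have "\<dots> = (\<Sum>j<m. \<Sum>g\<in>bin_patterns j. p j g * real (length (filter Q (pattern_path n' w g))))"
    using capacity_le_Cmax pattern_path_subset_arcs finite_arcs
    by (intro sum.cong refl) (simp flip: of_nat_sum add: sum_count_list_filter)
  finally show ?thesis .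
qed

lemma sum_sink_flow:
  "(\<Sum>j<m. sink_flow a j) = (\<Sum>j<m. \<Sum>g\<in>bin_patterns j. p j g * of_bool (pattern_size n' w g = a))"
  unfolding sink_flow_def by (intro sum.cong refl) auto

lemma arc_flow_nonneg: "0 \<le> arc_flow e"
  unfolding arc_flow_def using weight_nonneg by (auto intro!: sum_nonneg)

lemma sink_flow_nonneg: "j < m \<Longrightarrow> 0 \<le> sink_flow a j"
  unfolding sink_flow_def using weight_nonneg by (auto intro!: sum_nonneg)

lemma sink_flow_le_1: "j < m \<Longrightarrow> sink_flow a j \<le> 1"
proof -
  assume "j < m"
  then have "sink_flow a j \<le> (\<Sum>g\<in>bin_patterns j. p j g)"
    unfolding sink_flow_def using weight_nonneg by (intro sum_mono) auto
  with \<open>j < m\<close> show ?thesis by (simp add: convexity)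
qed

lemma sum_sink_flow_capacity: "j < m \<Longrightarrow> (\<Sum>a\<in>{0..C j}. sink_flow a j) = 1"
proof -
  assume "j < m"
  have "(\<Sum>a\<in>{0..C j}. sink_flow a j)
      = (\<Sum>g\<in>bin_patterns j. \<Sum>a\<in>{0..C j}. if pattern_size n' w g = a then p j g else 0)"
    unfolding sink_flow_def by (rule sum.swap)
  also have "\<dots> = (\<Sum>g\<in>bin_patterns j. p j g)"
    using pattern_size_le by (intro sum.cong refl) simp
  finally show ?thesis using \<open>j < m\<close> by (simp add: convexity)
qed

lemma sink_flow_beyond_capacity: "C j < a \<Longrightarrow> sink_flow a j = 0"
  unfolding sink_flow_def using pattern_size_le by (force intro!: sum.neutral)

lemma arc_flow_conservation:
  assumes "b \<noteq> 0"
  shows "(\<Sum>e\<in>{e\<in>graph_arcs. snd e = b}. arc_flow e) - (\<Sum>e\<in>{e\<in>graph_arcs. fst e = b}. arc_flow e)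
         - (\<Sum>j<m. sink_flow b j) = 0"
proof -
  have balance: "real (length (filter (\<lambda>e. snd e = b) (pattern_path n' w g)))
        - real (length (filter (\<lambda>e. fst e = b) (pattern_path n' w g)))
        - of_bool (pattern_size n' w g = b) = 0" for g
    using pattern_path_balance[of b n' w g] assms by simp
  have "(\<Sum>e\<in>{e\<in>graph_arcs. snd e = b}. arc_flow e) - (\<Sum>e\<in>{e\<in>graph_arcs. fst e = b}. arc_flow e)
         - (\<Sum>j<m. sink_flow b j)
      = (\<Sum>j<m. \<Sum>g\<in>bin_patterns j. p j g *
           (real (length (filter (\<lambda>e. snd e = b) (pattern_path n' w g)))
            - real (length (filter (\<lambda>e. fst e = b) (pattern_path n' w g)))
            - of_bool (pattern_size n' w g = b)))"
    unfolding sum_arc_flow sum_sink_flow by (simp only: right_diff_distrib sum_subtractf)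
  then show ?thesis
    unfolding balance by simp
qed

lemma arc_flow_source:
  "- (\<Sum>e\<in>{e\<in>graph_arcs. fst e = 0}. arc_flow e) - (\<Sum>j<m. sink_flow 0 j) = - real m"
proof -
  have leave_source: "- real (length (filter (\<lambda>e. fst e = 0) (pattern_path n' w g)))
        - of_bool (pattern_size n' w g = 0) = - 1" for g
    using pattern_path_balance[of 0 n' w g] pattern_path_no_arc_into_0[OF pos_weights] by simp
  have "- (\<Sum>e\<in>{e\<in>graph_arcs. fst e = 0}. arc_flow e) - (\<Sum>j<m. sink_flow 0 j)
      = (\<Sum>j<m. \<Sum>g\<in>bin_patterns j. p j g *
           (- real (length (filter (\<lambda>e. fst e = 0) (pattern_path n' w g)))
            - of_bool (pattern_size n' w g = 0)))"
    unfolding sum_arc_flow sum_sink_flow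
    by (simp only: right_diff_distrib mult_minus_right sum_subtractf sum_negf)
  also have "\<dots> = - real m"
    unfolding leave_source by (simp add: sum_negf convexity)
  finally show ?thesis .
qed

lemma arc_flow_demand:
  "d < n' \<Longrightarrow> (\<Sum>e\<in>{e\<in>graph_arcs. snd e = fst e + w d}. arc_flow e) = real (q d)"
  unfolding sum_arc_flow
  by (simp add: length_filter_pattern_path_item_arcs[OF inj_weights] mult.commute flip: demand)

lemma af_feasible: "af_feasible n' w q m C arc_flow sink_flow"
  unfolding af_feasible_def Let_def
  using arc_flow_nonneg sink_flow_nonneg sink_flow_le_1 arc_flow_conservation arc_flow_source
    sum_sink_flow_capacity arc_flow_demand sink_flow_beyond_capacity
  by auto

lemma af_objective_sink_flow: "af_objective m C f c sink_flow = cs_objective n' w q m C f c p"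
  unfolding af_objective_def cs_objective_def
proof (intro sum.cong refl)
  fix j assume "j \<in> {..<m}"
  have "(\<Sum>a\<in>{0..Cmax m C}. af_cost (f j) (c j) a * sink_flow a j)
      = (\<Sum>g\<in>bin_patterns j. \<Sum>a\<in>{0..Cmax m C}.
           if pattern_size n' w g = a then af_cost (f j) (c j) a * p j g else 0)"
    unfolding sink_flow_def sum_distrib_left by (subst sum.swap) (simp add: if_distrib cong: if_cong)
  also have "\<dots> = (\<Sum>g\<in>bin_patterns j. af_cost (f j) (c j) (pattern_size n' w g) * p j g)"
    using order_trans[OF pattern_size_le capacity_le_Cmax] \<open>j \<in> {..<m}\<close>
    by (intro sum.cong refl) simp
  also have "\<dots> = (\<Sum>g\<in>bin_patterns j. pattern_cost n' w (f j) (c j) g * p j g)"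
    using pattern_cost_eq_af_cost[OF _ pos_weights] by simp
  finally show "(\<Sum>a\<in>{0..Cmax m C}. af_cost (f j) (c j) a * sink_flow a j)
      = (\<Sum>g\<in>bin_patterns j. pattern_cost n' w (f j) (c j) g * p j g)" .
qed

end

lemma af_objective_nonneg:
  assumes "af_feasible n' w q m C x y" and "\<forall>j<m. f j \<ge> 0" and "\<forall>j<m. c j \<ge> 0"
  shows "0 \<le> af_objective m C f c y"
  using assms unfolding af_feasible_def af_objective_def Let_def
  by (auto intro!: sum_nonneg mult_nonneg_nonneg simp: af_cost_def)

theorem proposition3:
  fixes n' m :: nat and w q C :: "nat \<Rightarrow> nat" and f c :: "nat \<Rightarrow> real"
  assumes "inj_on w {..<n'}"
    and "\<forall>d<n'. w d > 0"
    and "\<forall>d<n'. q d \<ge> 1"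
    and "\<forall>j<m. C j > 0"
    and "\<forall>j<m. f j \<ge> 0"
    and "\<forall>j<m. c j \<ge> 0"
    and "\<exists>p. cs_feasible n' w q m C p"
  shows "z3 n' w q m C f c \<le> z2 n' w q m C f c"
proof -
  have bdd: "bdd_below ((\<lambda>(x, y). af_objective m C f c y) ` {(x, y). af_feasible n' w q m C x y})"
    using af_objective_nonneg[OF _ assms(5,6)] by (auto intro: bdd_belowI[where m = 0])
  have "z3 n' w q m C f c \<le> cs_objective n' w q m C f c p" if "cs_feasible n' w q m C p" for p
  proof -
    interpret cs_solution n' m w q C p
      using assms(1,2) that by unfold_locales
    show ?thesis
      unfolding z3_def af_objective_sink_flow[symmetric]
      by (rule cInf_lower) (use af_feasible bdd in auto)
  qed
  then show ?thesis
    unfolding z2_def using assms(7) by (intro cInf_greatest) auto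
qed

end
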